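(* Let $U=[a_1,b_1]\cup\dots\cup[a_k,b_k]\subseteq\mathbb{R}$ with $a_1\le b_1<a_2\le b_2<\dots<a_k\le b_k$, and let $S=\{x-a_1,\ (x-a_2)(x-b_1),\ \dots,\ (x-a_k)(x-b_{k-1}),\ b_k-x\}\subseteq\mathbb{R}[x]$. Then in $\mathbb{R}[x]$ the preordering generated by $S$ equals the quadratic module generated by $S$, i.e. $T_S=M_S$. Consequently the same equality $T_S=M_S$ holds for the preordering and quadratic module generated by $S$ in $\mathbb{R}[x,y]$.
   Context: For a finite set $S=\{s_1,\dots,s_m\}$ in a polynomial ring $A$ (here $A=\mathbb{R}[x]$ or $\mathbb{R}[x,y]$), the quadratic module $M_S$ generated by $S$ is the set of all $\sigma_0+\sigma_1s_1+\dots+\sigma_ms_m$ with each $\sigma_i$ a sum of squares of elements of $A$; the preordering $T_S$ generated by $S$ is the set of all $\sum_{e\in\{0,1\}^m}\sigma_e s_1^{e_1}\cdots s_m^{e_m}$ with each $\sigma_e$ a sum of squares in $A$. The set $S$ above is called the natural choice of generators for $U$. *)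

theory Defs
  imports "HOL-Computational_Algebra.Polynomial"
begin

definition sos :: "'a::comm_ring_1 set" where
  "sos = {s. \<exists>xs. s = (\<Sum>x\<leftarrow>xs. x ^ 2)}"

definition qmodule :: "'a::comm_ring_1 set \<Rightarrow> 'a set" where
  "qmodule S = {\<sigma>0 + (\<Sum>s\<in>S. \<sigma> s * s) | \<sigma>0 \<sigma>. \<sigma>0 \<in> sos \<and> (\<forall>s\<in>S. \<sigma> s \<in> sos)}"

definition preordering :: "'a::comm_ring_1 set \<Rightarrow> 'a set" where
  "preordering S = {(\<Sum>E\<in>Pow S. \<sigma> E * (\<Prod>s\<in>E. s)) | \<sigma>. \<forall>E\<in>Pow S. \<sigma> E \<in> sos}"

definition nat_gens :: "nat \<Rightarrow> (nat \<Rightarrow> real) \<Rightarrow> (nat \<Rightarrow> real) \<Rightarrow> real poly set" where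
  "nat_gens k a b =
     {[:- a 1, 1:]} \<union> {[:- a i, 1:] * [:- b (i - 1), 1:] | i. 2 \<le> i \<and> i \<le> k} \<union> {[:b k, -1:]}"

end

theory Submission
  imports Defs "HOL-Analysis.Analysis"
begin

text \<open>The preordering is generated, as a quadratic module, by the products of subsets of the
  generators, so it suffices that every product of two generators lies in the quadratic module.
  Let \<open>g = (x - B) (x - C)\<close> be the generator of a gap \<open>(B, C)\<close> of \<open>U\<close>, and let \<open>f\<close> be an endpoint
  generator or the generator of an earlier gap. A scaled product of even powers of linear forms
  gives a sum of squares \<open>u\<close> with \<open>u f \<le> 1\<close> on \<open>[a\<^sub>1, b\<^sub>k]\<close> outside the gap and \<open>u f \<ge> 1\<close> inside
  it; log-concavity controls the level sets. Then \<open>1 - u f = v g\<close> with \<open>v \<ge> 0\<close> on \<open>[a\<^sub>1, b\<^sub>k]\<close>,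
  so \<open>v\<close> lies in the quadratic module of \<open>x - a\<^sub>1\<close> and \<open>b\<^sub>k - x\<close> (the Positivstellensatz for an
  interval), and \<open>f g = f\<^sup>2 (u g) + g\<^sup>2 (v f)\<close> lies in the quadratic module as soon as
  \<open>(x - a\<^sub>1) f\<close> and \<open>(b\<^sub>k - x) f\<close> do. Embedding \<open>\<real>[x]\<close> into \<open>\<real>[x, y]\<close> as constants preserves
  all of this.\<close>

section \<open>Quadratic modules and preorderings\<close>

lemma sos_0 [simp]: "0 \<in> sos"
  unfolding sos_def by (auto intro: exI[of _ "[]"])

lemma power2_in_sos [simp]: "x ^ 2 \<in> sos"
  unfolding sos_def by (auto intro: exI[of _ "[x]"])

lemma sos_1 [simp]: "1 \<in> sos"
  using power2_in_sos[of 1] by simp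

lemma sos_add: "p \<in> sos \<Longrightarrow> q \<in> sos \<Longrightarrow> p + q \<in> sos"
  unfolding sos_def by (auto intro: exI[of _ "_ @ _"])

lemma sos_mult:
  assumes "p \<in> sos" and q: "q \<in> sos"
  shows "p * q \<in> sos"
proof -
  obtain xs where p: "p = (\<Sum>x\<leftarrow>xs. x ^ 2)"
    using \<open>p \<in> sos\<close> unfolding sos_def by auto
  have square_mult: "x ^ 2 * q \<in> sos" for x
  proof -
    obtain ys where "q = (\<Sum>y\<leftarrow>ys. y ^ 2)"
      using q unfolding sos_def by auto
    then have "x ^ 2 * q = (\<Sum>y\<leftarrow>map ((*) x) ys. y ^ 2)"
      by (induct ys arbitrary: q) (simp_all add: distrib_left power_mult_distrib)
    then show ?thesis
      unfolding sos_def by blast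
  qed
  show ?thesis
    unfolding p by (induct xs) (auto simp: distrib_right square_mult intro: sos_add)
qed

lemma sos_image:
  fixes h :: "'a::comm_ring_1 \<Rightarrow> 'b::comm_ring_1"
  assumes add: "\<And>x y. h (x + y) = h x + h y" and mult: "\<And>x y. h (x * y) = h x * h y"
    and "p \<in> sos"
  shows "h p \<in> sos"
proof -
  obtain xs where p: "p = (\<Sum>x\<leftarrow>xs. x ^ 2)"
    using \<open>p \<in> sos\<close> unfolding sos_def by auto
  have "h 0 = 0"
    using add[of 0 0] by simp
  then have "h p = (\<Sum>x\<leftarrow>map h xs. x ^ 2)"
    unfolding p by (induct xs) (simp_all add: add mult power2_eq_square)
  then show ?thesis
    unfolding sos_def by blast
qed

lemma qmoduleI:
  "\<sigma>0 \<in> sos \<Longrightarrow> (\<And>s. s \<in> S \<Longrightarrow> \<sigma> s \<in> sos) \<Longrightarrow> p = \<sigma>0 + (\<Sum>s\<in>S. \<sigma> s * s) \<Longrightarrow> p \<in> qmodule S"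
  unfolding qmodule_def by blast

lemma qmoduleE:
  assumes "p \<in> qmodule S"
  obtains \<sigma>0 \<sigma> where "\<sigma>0 \<in> sos" "\<And>s. s \<in> S \<Longrightarrow> \<sigma> s \<in> sos" "p = \<sigma>0 + (\<Sum>s\<in>S. \<sigma> s * s)"
  using assms unfolding qmodule_def by blast

lemma qmodule_add: "p \<in> qmodule S \<Longrightarrow> q \<in> qmodule S \<Longrightarrow> p + q \<in> qmodule S"
proof (elim qmoduleE)
  fix \<sigma>0 \<sigma> \<tau>0 \<tau>
  assume "\<sigma>0 \<in> sos" "\<And>s. s \<in> S \<Longrightarrow> \<sigma> s \<in> sos" "p = \<sigma>0 + (\<Sum>s\<in>S. \<sigma> s * s)"
    and "\<tau>0 \<in> sos" "\<And>s. s \<in> S \<Longrightarrow> \<tau> s \<in> sos" "q = \<tau>0 + (\<Sum>s\<in>S. \<tau> s * s)"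
  then show ?thesis
    by (intro qmoduleI[of "\<sigma>0 + \<tau>0" S "\<lambda>s. \<sigma> s + \<tau> s"]) (auto simp: sum.distrib distrib_right intro: sos_add)
qed

lemma qmodule_sos_mult: "\<sigma> \<in> sos \<Longrightarrow> p \<in> qmodule S \<Longrightarrow> \<sigma> * p \<in> qmodule S"
proof (elim qmoduleE)
  fix \<tau>0 \<tau>
  assume "\<sigma> \<in> sos" "\<tau>0 \<in> sos" "\<And>s. s \<in> S \<Longrightarrow> \<tau> s \<in> sos" "p = \<tau>0 + (\<Sum>s\<in>S. \<tau> s * s)"
  then show ?thesis
    by (intro qmoduleI[of "\<sigma> * \<tau>0" S "\<lambda>s. \<sigma> * \<tau> s"])
       (auto simp: sum_distrib_left distrib_left mult.assoc intro: sos_mult)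
qed

lemma sos_in_qmodule: "\<sigma> \<in> sos \<Longrightarrow> \<sigma> \<in> qmodule S"
  by (rule qmoduleI[of \<sigma> S "\<lambda>_. 0"]) auto

lemma zero_in_qmodule: "0 \<in> qmodule S"
  by (simp add: sos_in_qmodule)

lemma sum_delta_mult:
  "finite S \<Longrightarrow> s \<in> S \<Longrightarrow> (\<Sum>t\<in>S. (if t = s then 1 else 0) * f t) = (f s :: 'a::semiring_1)"
  by (simp add: sum.delta' if_distrib[of "\<lambda>c. c * _"] cong: if_cong)

lemma generator_in_qmodule: "finite S \<Longrightarrow> s \<in> S \<Longrightarrow> s \<in> qmodule S"
  by (rule qmoduleI[of 0 S "\<lambda>t. if t = s then 1 else 0"]) (auto simp: sum_delta_mult)

lemma qmodule_sum: "(\<And>i. i \<in> I \<Longrightarrow> f i \<in> qmodule S) \<Longrightarrow> sum f I \<in> qmodule S"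
  by (induct I rule: infinite_finite_induct) (auto intro: qmodule_add zero_in_qmodule)

lemma qmodule_mult:
  assumes "p \<in> qmodule T" and "q \<in> qmodule S" and "\<And>t. t \<in> T \<Longrightarrow> t * q \<in> qmodule S"
  shows "p * q \<in> qmodule S"
proof -
  obtain \<sigma>0 \<sigma> where \<sigma>: "\<sigma>0 \<in> sos" "\<And>t. t \<in> T \<Longrightarrow> \<sigma> t \<in> sos"
    and p: "p = \<sigma>0 + (\<Sum>t\<in>T. \<sigma> t * t)"
    using \<open>p \<in> qmodule T\<close> by (rule qmoduleE) blast
  have "p * q = \<sigma>0 * q + (\<Sum>t\<in>T. \<sigma> t * (t * q))"
    by (simp add: p distrib_right sum_distrib_right mult.assoc)
  also have "\<dots> \<in> qmodule S"
    using assms \<sigma> by (intro qmodule_add qmodule_sum) (simp_all add: qmodule_sos_mult)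
  finally show ?thesis .
qed

lemma qmodule_mono:
  assumes "finite T" and "S \<subseteq> T"
  shows "qmodule S \<subseteq> qmodule T"
proof
  fix p
  assume "p \<in> qmodule S"
  moreover have "1 \<in> qmodule T"
    by (simp add: sos_in_qmodule)
  moreover have "s * 1 \<in> qmodule T" if "s \<in> S" for s
    using assms that by (simp add: generator_in_qmodule subsetD)
  ultimately have "p * 1 \<in> qmodule T"
    by (rule qmodule_mult)
  then show "p \<in> qmodule T"
    by simp
qed

lemma qmodule_image:
  fixes h :: "'a::comm_ring_1 \<Rightarrow> 'b::comm_ring_1"
  assumes add: "\<And>x y. h (x + y) = h x + h y" and mult: "\<And>x y. h (x * y) = h x * h y"
    and inj: "inj_on h S" and "p \<in> qmodule S"
  shows "h p \<in> qmodule (h ` S)"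
proof -
  obtain \<sigma>0 \<sigma> where \<sigma>: "\<sigma>0 \<in> sos" "\<And>s. s \<in> S \<Longrightarrow> \<sigma> s \<in> sos"
    and p: "p = \<sigma>0 + (\<Sum>s\<in>S. \<sigma> s * s)"
    using \<open>p \<in> qmodule S\<close> by (rule qmoduleE) blast
  have "h 0 = 0"
    using add[of 0 0] by simp
  then have "h p = h \<sigma>0 + (\<Sum>s\<in>S. h (\<sigma> s) * h s)"
    unfolding p add mult sum_comp_morphism[of h, OF \<open>h 0 = 0\<close> add, symmetric] by (simp add: o_def mult)
  also have "\<dots> = h \<sigma>0 + (\<Sum>t\<in>h ` S. h (\<sigma> (inv_into S h t)) * t)"
    by (simp add: sum.reindex[OF inj] inv_into_f_f[OF inj])
  finally show ?thesis
  proof (rule qmoduleI[rotated 2])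
    show "h \<sigma>0 \<in> sos"
      using add mult \<sigma>(1) by (rule sos_image)
    show "h (\<sigma> (inv_into S h t)) \<in> sos" if "t \<in> h ` S" for t
      using add mult \<sigma>(2)[OF inv_into_into[OF that]] by (rule sos_image)
  qed
qed

lemma prod_in_qmodule:
  assumes "finite S" and mult: "\<And>s t. s \<in> S \<Longrightarrow> t \<in> S \<Longrightarrow> s * t \<in> qmodule S"
    and "E \<subseteq> S"
  shows "(\<Prod>s\<in>E. s) \<in> qmodule S"
  using finite_subset[OF \<open>E \<subseteq> S\<close> \<open>finite S\<close>] \<open>E \<subseteq> S\<close>
proof (induct E rule: finite_induct)
  case empty
  show ?case
    by (simp add: sos_in_qmodule)
next
  case (insert s E)
  then have s: "s \<in> S" and "E \<subseteq> S"
    by simp_all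
  have "(\<Prod>s\<in>E. s) * s \<in> qmodule S"
    using insert.hyps(3)[OF \<open>E \<subseteq> S\<close>] generator_in_qmodule[OF \<open>finite S\<close> s] mult[OF _ s]
    by (rule qmodule_mult)
  then show ?case
    using insert.hyps(1,2) by (simp add: mult.commute)
qed

lemma qmodule_bezout_mult:
  assumes "u * f + v * g = 1" and "u * g \<in> qmodule S" and "v * f \<in> qmodule S"
  shows "f * g \<in> qmodule S"
proof -
  have "f * g = f * g * (u * f + v * g)"
    by (simp add: assms(1))
  also have "\<dots> = f ^ 2 * (u * g) + g ^ 2 * (v * f)"
    by (simp add: power2_eq_square algebra_simps)
  also have "\<dots> \<in> qmodule S"
    using assms(2,3) by (simp add: qmodule_add qmodule_sos_mult)
  finally show ?thesis .
qed

lemma preorderingI: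
  "(\<And>E. E \<subseteq> S \<Longrightarrow> \<sigma> E \<in> sos) \<Longrightarrow> p = (\<Sum>E\<in>Pow S. \<sigma> E * (\<Prod>s\<in>E. s)) \<Longrightarrow> p \<in> preordering S"
  unfolding preordering_def by blast

lemma preorderingE:
  assumes "p \<in> preordering S"
  obtains \<sigma> where "\<And>E. E \<subseteq> S \<Longrightarrow> \<sigma> E \<in> sos" "p = (\<Sum>E\<in>Pow S. \<sigma> E * (\<Prod>s\<in>E. s))"
  using assms unfolding preordering_def by blast

lemma preordering_add:
  "p \<in> preordering S \<Longrightarrow> q \<in> preordering S \<Longrightarrow> p + q \<in> preordering S"
proof (elim preorderingE)
  fix \<sigma> \<tau>
  assume "\<And>E. E \<subseteq> S \<Longrightarrow> \<sigma> E \<in> sos" "p = (\<Sum>E\<in>Pow S. \<sigma> E * (\<Prod>s\<in>E. s))"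
    and "\<And>E. E \<subseteq> S \<Longrightarrow> \<tau> E \<in> sos" "q = (\<Sum>E\<in>Pow S. \<tau> E * (\<Prod>s\<in>E. s))"
  then show ?thesis
    by (intro preorderingI[of S "\<lambda>E. \<sigma> E + \<tau> E"]) (auto simp: sum.distrib distrib_right intro: sos_add)
qed

lemma preordering_sos_mult:
  "\<sigma> \<in> sos \<Longrightarrow> p \<in> preordering S \<Longrightarrow> \<sigma> * p \<in> preordering S"
proof (elim preorderingE)
  fix \<tau>
  assume "\<sigma> \<in> sos" "\<And>E. E \<subseteq> S \<Longrightarrow> \<tau> E \<in> sos" "p = (\<Sum>E\<in>Pow S. \<tau> E * (\<Prod>s\<in>E. s))"
  then show ?thesis
    by (intro preorderingI[of S "\<lambda>E. \<sigma> * \<tau> E"]) (auto simp: sum_distrib_left mult.assoc intro: sos_mult)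
qed

lemma prod_in_preordering: "finite S \<Longrightarrow> E \<subseteq> S \<Longrightarrow> (\<Prod>s\<in>E. s) \<in> preordering S"
  by (rule preorderingI[of S "\<lambda>F. if F = E then 1 else 0"]) (auto simp: sum_delta_mult)

lemma zero_in_preordering: "0 \<in> preordering S"
  by (rule preorderingI[of S "\<lambda>_. 0"]) simp_all

lemma preordering_sum:
  "(\<And>i. i \<in> I \<Longrightarrow> f i \<in> preordering S) \<Longrightarrow> sum f I \<in> preordering S"
  by (induct I rule: infinite_finite_induct) (simp_all add: zero_in_preordering preordering_add)

lemma qmodule_subset_preordering:
  assumes "finite S"
  shows "qmodule S \<subseteq> preordering S"
proof
  fix p
  assume "p \<in> qmodule S"
  then obtain \<sigma>0 \<sigma> where \<sigma>: "\<sigma>0 \<in> sos" "\<And>s. s \<in> S \<Longrightarrow> \<sigma> s \<in> sos"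
    and p: "p = \<sigma>0 + (\<Sum>s\<in>S. \<sigma> s * s)"
    by (rule qmoduleE) blast
  have "\<sigma>0 * (\<Prod>s\<in>{}. s) \<in> preordering S"
    using \<sigma>(1) assms by (intro preordering_sos_mult prod_in_preordering) simp_all
  moreover have "\<sigma> s * (\<Prod>s\<in>{s}. s) \<in> preordering S" if "s \<in> S" for s
    using \<sigma>(2)[OF that] assms that by (intro preordering_sos_mult prod_in_preordering) simp_all
  ultimately show "p \<in> preordering S"
    unfolding p by (simp add: preordering_add preordering_sum)
qed

lemma preordering_eq_qmodule:
  assumes "finite S" and "\<And>s t. s \<in> S \<Longrightarrow> t \<in> S \<Longrightarrow> s * t \<in> qmodule S"
  shows "preordering S = qmodule S"
proof
  show "preordering S \<subseteq> qmodule S"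
  proof
    fix p
    assume "p \<in> preordering S"
    then obtain \<sigma> where \<sigma>: "\<And>E. E \<subseteq> S \<Longrightarrow> \<sigma> E \<in> sos"
      and p: "p = (\<Sum>E\<in>Pow S. \<sigma> E * (\<Prod>s\<in>E. s))"
      by (rule preorderingE) blast
    show "p \<in> qmodule S"
      unfolding p
    proof (rule qmodule_sum)
      fix E
      assume "E \<in> Pow S"
      then show "\<sigma> E * (\<Prod>s\<in>E. s) \<in> qmodule S"
        using assms \<sigma> by (simp add: qmodule_sos_mult prod_in_qmodule)
    qed
  qed
  show "qmodule S \<subseteq> preordering S"
    using assms(1) by (rule qmodule_subset_preordering)
qed

section \<open>Nonnegative polynomials on an interval\<close>

lemma poly_eqI_eval: "(\<And>x. poly p x = poly q x) \<Longrightarrow> p = (q :: 'a::{idom,ring_char_0} poly)"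
  by (simp add: poly_eq_poly_eq_iff[symmetric] fun_eq_iff)

lemma const_poly_in_sos: "0 \<le> c \<Longrightarrow> [:c:] \<in> (sos :: real poly set)"
  using power2_in_sos[of "[:sqrt c:]"] by (simp add: power2_eq_square)

lemma poly_nonneg_except_finite:
  fixes p :: "real poly"
  assumes "A < Z" and "finite F" and nonneg: "\<And>y. A \<le> y \<Longrightarrow> y \<le> Z \<Longrightarrow> y \<notin> F \<Longrightarrow> 0 \<le> poly p y"
    and x: "A \<le> x" "x \<le> Z"
  shows "0 \<le> poly p x"
proof -
  have avoid: "\<forall>\<^sub>F y in at x within S. y \<notin> F" for S
    using islimpt_finite[OF \<open>finite F\<close>, of x] filter_leD[OF at_le[OF subset_UNIV]]
    unfolding islimpt_iff_eventually by blast
  have lim: "(poly p \<longlongrightarrow> poly p x) (at x within S)" for S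
    by (rule tendsto_poly[OF tendsto_ident_at])
  show ?thesis
  proof (cases "x < Z")
    case True
    have "\<forall>\<^sub>F y in at_right x. 0 \<le> poly p y"
      using eventually_conj[OF eventually_at_right_real[OF True] avoid]
      by eventually_elim (use nonneg x in auto)
    then show ?thesis
      using lim by (intro tendsto_lowerbound) auto
  next
    case False
    then have "A < x"
      using x \<open>A < Z\<close> by simp
    have "\<forall>\<^sub>F y in at_left x. 0 \<le> poly p y"
      using eventually_conj[OF eventually_at_left_real[OF \<open>A < x\<close>] avoid]
      by eventually_elim (use nonneg x in auto)
    then show ?thesis
      using lim by (intro tendsto_lowerbound) auto
  qed
qed

lemma qmodule_pairI:
  "\<sigma>0 \<in> sos \<Longrightarrow> \<sigma>1 \<in> sos \<Longrightarrow> \<sigma>2 \<in> sos \<Longrightarrow> \<sigma>0 + \<sigma>1 * p + \<sigma>2 * q \<in> qmodule {p, q}"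
  by (intro qmodule_add qmodule_sos_mult sos_in_qmodule generator_in_qmodule) simp_all

abbreviation interval_qmodule :: "real \<Rightarrow> real \<Rightarrow> real poly set" where
  "interval_qmodule A Z \<equiv> qmodule {[:-A, 1:], [:Z, -1:]}"

lemma interval_generators_mult:
  assumes "A \<le> Z"
  shows "[:-A, 1:] * [:Z, -1:] \<in> interval_qmodule A Z"
proof (cases "A = Z")
  case True
  define s1 s2 where "s1 = ([:1/2:] * (1 - [:-A, 1:])) ^ 2" and "s2 = ([:1/2:] * (1 + [:-A, 1:])) ^ 2"
  have "[:-A, 1:] * [:Z, -1:] = 0 + s1 * [:-A, 1:] + s2 * [:Z, -1:]"
    by (rule poly_eqI_eval) (simp add: s1_def s2_def True power2_eq_square algebra_simps)
  then show ?thesis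
    unfolding s1_def s2_def by (simp only: qmodule_pairI power2_in_sos sos_0)
next
  case False
  then have "A < Z"
    using assms by simp
  define c where "c = 1 / (Z - A)"
  have "c \<ge> 0"
    using \<open>A < Z\<close> by (simp add: c_def)
  have "[:-A, 1:] * [:Z, -1:] = 0 + ([:c:] * [:Z, -1:] ^ 2) * [:-A, 1:] + ([:c:] * [:-A, 1:] ^ 2) * [:Z, -1:]"
  proof (rule poly_eqI_eval)
    fix x
    have "c * (Z - A) = 1"
      using \<open>A < Z\<close> by (simp add: c_def)
    have "poly (0 + ([:c:] * [:Z, -1:] ^ 2) * [:-A, 1:] + ([:c:] * [:-A, 1:] ^ 2) * [:Z, -1:]) x
        = (c * (Z - A)) * ((x - A) * (Z - x))"
      by (simp add: power2_eq_square algebra_simps)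
    also have "\<dots> = poly ([:-A, 1:] * [:Z, -1:]) x"
      using \<open>c * (Z - A) = 1\<close> by (simp add: algebra_simps)
    finally show "poly ([:-A, 1:] * [:Z, -1:]) x
      = poly (0 + ([:c:] * [:Z, -1:] ^ 2) * [:-A, 1:] + ([:c:] * [:-A, 1:] ^ 2) * [:Z, -1:]) x"
      by simp
  qed
  then show ?thesis
    using \<open>c \<ge> 0\<close> by (simp only: qmodule_pairI sos_mult const_poly_in_sos power2_in_sos sos_0)
qed

lemma interval_qmodule_mult_generator:
  assumes "A \<le> Z" and p: "p \<in> interval_qmodule A Z" and g: "g \<in> {[:-A, 1:], [:Z, -1:]}"
  shows "g * p \<in> interval_qmodule A Z"
proof -
  have "t * g \<in> interval_qmodule A Z" if "t \<in> {[:-A, 1:], [:Z, -1:]}" for t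
  proof (cases "t = g")
    case True
    then show ?thesis
      using sos_in_qmodule[OF power2_in_sos[of g]] by (simp add: power2_eq_square)
  next
    case False
    with that g have "t * g = [:-A, 1:] * [:Z, -1:]"
      by (auto simp: mult.commute)
    then show ?thesis
      using interval_generators_mult[OF \<open>A \<le> Z\<close>] by simp
  qed
  moreover have "g \<in> interval_qmodule A Z"
    using g by (simp add: generator_in_qmodule)
  ultimately have "p * g \<in> interval_qmodule A Z"
    using p by (intro qmodule_mult[of p "{[:-A, 1:], [:Z, -1:]}"]) blast+
  then show ?thesis
    by (simp add: mult.commute)
qed

lemma interval_qmodule_root_step:
  fixes f :: "real poly"
  assumes "A < Z" and r: "A \<le> r" "r \<le> Z" and "poly f r = 0" and "f \<noteq> 0"
    and nonneg: "\<And>x. A \<le> x \<Longrightarrow> x \<le> Z \<Longrightarrow> 0 \<le> poly f x"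
    and IH: "\<And>g. degree g < degree f \<Longrightarrow> (\<And>x. A \<le> x \<Longrightarrow> x \<le> Z \<Longrightarrow> 0 \<le> poly g x)
               \<Longrightarrow> g \<in> interval_qmodule A Z"
  shows "f \<in> interval_qmodule A Z"
proof -
  obtain g where f: "f = [:-r, 1:] * g"
    using \<open>poly f r = 0\<close> by (auto simp: poly_eq_0_iff_dvd)
  then have "g \<noteq> 0"
    using \<open>f \<noteq> 0\<close> by auto
  then have deg_g: "degree g < degree f"
    unfolding f by (subst degree_mult_eq) auto
  have sign: "0 \<le> (x - r) * poly g x" if "A \<le> x" "x \<le> Z" for x
    using nonneg[OF that] by (simp add: f algebra_simps)
  consider "r = A" | "r = Z" | "A < r" "r < Z"
    using r by linarith
  then show ?thesis
  proof cases
    case 1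
    have "0 \<le> poly g x" if "A \<le> x" "x \<le> Z" for x
      by (rule poly_nonneg_except_finite[OF \<open>A < Z\<close>, of "{A}"])
        (use that sign 1 in \<open>auto simp: zero_le_mult_iff\<close>)
    then have "g \<in> interval_qmodule A Z"
      by (rule IH[OF deg_g])
    then show ?thesis
      unfolding f 1 using \<open>A < Z\<close> by (intro interval_qmodule_mult_generator) simp_all
  next
    case 2
    have "0 \<le> poly (- g) x" if "A \<le> x" "x \<le> Z" for x
      by (rule poly_nonneg_except_finite[OF \<open>A < Z\<close>, of "{Z}"])
        (use that sign 2 in \<open>auto simp: zero_le_mult_iff\<close>)
    then have "- g \<in> interval_qmodule A Z"
      using deg_g by (intro IH) simp_all
    then have "[:Z, -1:] * - g \<in> interval_qmodule A Z"
      using \<open>A < Z\<close> by (intro interval_qmodule_mult_generator) simp_all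
    moreover have "[:Z, -1:] * - g = f"
      by (rule poly_eqI_eval) (simp add: f 2 algebra_simps)
    ultimately show ?thesis
      by simp
  next
    case 3
    txt \<open>An interior root is a double root, because \<open>f\<close> does not change sign there.\<close>
    have g_pos: "0 \<le> poly g y" if "r < y" "y \<le> Z" for y
      using sign[of y] that 3 by (simp add: zero_le_mult_iff)
    have g_neg: "0 \<le> poly (- g) y" if "A \<le> y" "y < r" for y
      using sign[of y] that 3 by (simp add: zero_le_mult_iff)
    have "0 \<le> poly g r"
      by (rule poly_nonneg_except_finite[OF \<open>r < Z\<close>, of "{r}"]) (use g_pos 3 in auto)
    moreover have "0 \<le> poly (- g) r"
      by (rule poly_nonneg_except_finite[OF \<open>A < r\<close>, of "{r}"]) (use g_neg 3 in auto)
    ultimately obtain h where g: "g = [:-r, 1:] * h"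
      by (auto simp: poly_eq_0_iff_dvd)
    have "degree g = degree h + 1"
      using \<open>g \<noteq> 0\<close> unfolding g by (subst degree_mult_eq) auto
    with deg_g have deg_h: "degree h < degree f"
      by simp
    have f_h: "f = [:-r, 1:] ^ 2 * h"
      unfolding f g power2_eq_square by (simp only: mult.assoc)
    have "0 \<le> poly h x" if "A \<le> x" "x \<le> Z" for x
    proof (rule poly_nonneg_except_finite[OF \<open>A < Z\<close>, of "{r}"])
      fix y
      assume "A \<le> y" "y \<le> Z" "y \<notin> {r}"
      then show "0 \<le> poly h y"
        using nonneg[of y] by (simp add: f_h zero_le_mult_iff)
    qed (use that in simp_all)
    then have "h \<in> interval_qmodule A Z"
      by (rule IH[OF deg_h])
    then show ?thesis
      unfolding f_h by (rule qmodule_sos_mult[OF power2_in_sos])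
  qed
qed

text \<open>Subtracting the minimum of \<open>f\<close> on \<open>[A, Z]\<close> creates a root there without raising the degree.\<close>

theorem nonneg_on_interval_imp_interval_qmodule:
  fixes f :: "real poly"
  assumes "A < Z" and "\<And>x. A \<le> x \<Longrightarrow> x \<le> Z \<Longrightarrow> 0 \<le> poly f x"
  shows "f \<in> interval_qmodule A Z"
  using assms(2)
proof (induction "degree f" arbitrary: f rule: less_induct)
  case less
  obtain x0 where x0: "A \<le> x0" "x0 \<le> Z" and min: "\<And>y. A \<le> y \<Longrightarrow> y \<le> Z \<Longrightarrow> poly f x0 \<le> poly f y"
  proof -
    have "continuous_on {A..Z} (poly f)"
      by (intro continuous_intros)
    then show ?thesis
      using continuous_attains_inf[of "{A..Z}" "poly f"] \<open>A < Z\<close> that by auto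
  qed
  define m where "m = poly f x0"
  have "m \<ge> 0"
    using less.prems x0 by (simp add: m_def)
  have "f - [:m:] \<in> interval_qmodule A Z"
  proof (cases "f - [:m:] = 0")
    case False
    have "degree (f - [:m:]) \<le> degree f"
      by (simp add: degree_diff_le)
    show ?thesis
    proof (rule interval_qmodule_root_step[OF \<open>A < Z\<close> x0 _ False])
      show "poly (f - [:m:]) x0 = 0"
        by (simp add: m_def)
      show "0 \<le> poly (f - [:m:]) x" if "A \<le> x" "x \<le> Z" for x
        using min[OF that] by (simp add: m_def)
      show "g \<in> interval_qmodule A Z"
        if "degree g < degree (f - [:m:])" "\<And>x. A \<le> x \<Longrightarrow> x \<le> Z \<Longrightarrow> 0 \<le> poly g x" for g
        using that less.hyps \<open>degree (f - [:m:]) \<le> degree f\<close> by simp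
    qed
  qed (simp add: zero_in_qmodule)
  moreover have "[:m:] \<in> interval_qmodule A Z"
    using \<open>m \<ge> 0\<close> by (intro sos_in_qmodule const_poly_in_sos)
  ultimately show ?case
    using qmodule_add by fastforce
qed

section \<open>Sums of squares separating a gap\<close>

definition log_concave_on :: "real set \<Rightarrow> (real \<Rightarrow> real) \<Rightarrow> bool" where
  "log_concave_on I f \<longleftrightarrow> (\<forall>x\<in>I. 0 < f x) \<and>
     (\<forall>s\<in>I. \<forall>t\<in>I. \<forall>w. 0 \<le> w \<longrightarrow> w \<le> 1 \<longrightarrow> f s powr (1 - w) * f t powr w \<le> f ((1 - w) * s + w * t))"

lemma log_concave_onD:
  "log_concave_on I f \<Longrightarrow> s \<in> I \<Longrightarrow> t \<in> I \<Longrightarrow> 0 \<le> w \<Longrightarrow> w \<le> 1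
    \<Longrightarrow> f s powr (1 - w) * f t powr w \<le> f ((1 - w) * s + w * t)"
  unfolding log_concave_on_def by blast

lemma log_concave_on_pos: "log_concave_on I f \<Longrightarrow> x \<in> I \<Longrightarrow> 0 < f x"
  unfolding log_concave_on_def by blast

lemma log_concave_on_affine:
  assumes "\<And>x. x \<in> I \<Longrightarrow> 0 < a * x + b"
  shows "log_concave_on I (\<lambda>x. a * x + b)"
  unfolding log_concave_on_def
proof (intro conjI ballI allI impI)
  fix s t w :: real
  assume "s \<in> I" "t \<in> I" "0 \<le> w" "w \<le> 1"
  then have "(a * s + b) powr (1 - w) * (a * t + b) powr w \<le> (1 - w) * (a * s + b) + w * (a * t + b)"
    using assms by (intro Youngs_inequality_0) (auto simp: less_imp_le)
  also have "\<dots> = a * ((1 - w) * s + w * t) + b"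
    by (simp add: algebra_simps)
  finally show "(a * s + b) powr (1 - w) * (a * t + b) powr w \<le> a * ((1 - w) * s + w * t) + b" .
qed (use assms in auto)

lemma log_concave_on_mult:
  assumes f: "log_concave_on I f" and g: "log_concave_on I g"
  shows "log_concave_on I (\<lambda>x. f x * g x)"
  unfolding log_concave_on_def
proof (intro conjI ballI allI impI)
  fix s t w :: real
  assume st: "s \<in> I" "t \<in> I" and w: "0 \<le> w" "w \<le> 1"
  have "(f s * g s) powr (1 - w) * (f t * g t) powr w
      = (f s powr (1 - w) * f t powr w) * (g s powr (1 - w) * g t powr w)"
    using st f g by (simp add: powr_mult log_concave_on_pos less_imp_le ac_simps)
  also have "\<dots> \<le> f ((1 - w) * s + w * t) * g ((1 - w) * s + w * t)"
    using log_concave_onD[OF f st w] log_concave_onD[OF g st w]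
    by (intro mult_mono) (auto intro: order_trans[OF _ log_concave_onD[OF f st w]])
  finally show "(f s * g s) powr (1 - w) * (f t * g t) powr w
      \<le> f ((1 - w) * s + w * t) * g ((1 - w) * s + w * t)" .
qed (use f g in \<open>simp add: log_concave_on_pos\<close>)

lemma log_concave_on_const: "0 < c \<Longrightarrow> log_concave_on I (\<lambda>_. c)"
  unfolding log_concave_on_def by (auto simp: powr_add[symmetric])

lemma log_concave_on_power: "log_concave_on I f \<Longrightarrow> log_concave_on I (\<lambda>x. f x ^ n)"
proof (induct n)
  case 0
  then show ?case
    using log_concave_on_const[of 1] by simp
next
  case (Suc n)
  then show ?case
    using log_concave_on_mult[of I f "\<lambda>x. f x ^ n"] by simp
qed

lemma log_concave_on_ge_1_between:
  assumes f: "log_concave_on I f" and "s \<in> I" "t \<in> I" "s < t" "f s = 1" "f t = 1"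
    and x: "s \<le> x" "x \<le> t"
  shows "1 \<le> f x"
proof -
  define w where "w = (x - s) / (t - s)"
  have w: "0 \<le> w" "w \<le> 1"
    using x \<open>s < t\<close> by (auto simp: w_def field_simps)
  have "w * (t - s) = x - s"
    using \<open>s < t\<close> by (simp add: w_def)
  then have "(1 - w) * s + w * t = x"
    by (simp add: algebra_simps)
  then show ?thesis
    using log_concave_onD[OF f \<open>s \<in> I\<close> \<open>t \<in> I\<close> w] assms by simp
qed

text \<open>If \<open>f x > 1\<close> at a point \<open>x\<close> outside \<open>[s, t]\<close>, the value \<open>1\<close> at the nearer endpoint would be a
  weighted geometric mean of \<open>f x\<close> and \<open>1\<close> with positive weight on \<open>f x\<close>, hence \<open>> 1\<close>.\<close>

lemma log_concave_on_le_1_outside: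
  assumes f: "log_concave_on {a<..<b} f" and "a < s" "s < t" "t < b" "f s = 1" "f t = 1"
    and x: "a < x" "x < b" "x \<le> s \<or> t \<le> x"
  shows "f x \<le> 1"
proof (rule ccontr)
  assume "\<not> f x \<le> 1"
  then have gt: "1 < f x powr v" if "0 < v" for v
    using that by simp
  consider "x < s" | "t < x"
    using x assms(5,6) \<open>\<not> f x \<le> 1\<close> by force
  then show False
  proof cases
    case 1
    define w where "w = (s - x) / (t - x)"
    have w: "0 \<le> w" "w \<le> 1" "1 - w > 0"
      using 1 \<open>s < t\<close> by (auto simp: w_def field_simps)
    have "w * (t - x) = s - x"
      using 1 \<open>s < t\<close> by (simp add: w_def)
    then have "(1 - w) * x + w * t = s"
      by (simp add: algebra_simps)
    then have "f x powr (1 - w) \<le> 1"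
      using log_concave_onD[OF f _ _ w(1,2), of x t] assms x by simp
    then show False
      using gt[OF w(3)] by simp
  next
    case 2
    define w where "w = (t - s) / (x - s)"
    have w: "0 \<le> w" "w \<le> 1" "w > 0"
      using 2 \<open>s < t\<close> by (auto simp: w_def field_simps)
    have "w * (x - s) = t - s"
      using 2 \<open>s < t\<close> by (simp add: w_def)
    then have "(1 - w) * s + w * x = t"
      by (simp add: algebra_simps)
    then have "f x powr w \<le> 1"
      using log_concave_onD[OF f _ _ w(1,2), of s x] assms x by simp
    then show False
      using gt[OF w(3)] by simp
  qed
qed

text \<open>The pole \<open>E\<close> is placed so that \<open>(E - C) / (E - B)\<close> is the \<open>2 n\<close>-th root of \<open>\<rho>\<close>; as \<open>n\<close>
  grows this root tends to 1 and \<open>E\<close> moves off to the right.\<close>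

lemma pole_with_ratio:
  fixes B C Z \<rho> :: real
  assumes "B < C" and "0 < \<rho>" and "\<rho> < 1"
  obtains n :: nat and E where "Z < E" "(E - C) ^ (2 * n) = \<rho> * (E - B) ^ (2 * n)"
    and "2 * real n * (C - B) \<le> - ln \<rho> * (E - B)"
proof -
  define L where "L = - ln \<rho>"
  have "0 < L"
    using assms by (simp add: L_def)
  obtain n0 :: nat where n0: "L * (Z - B) / (2 * (C - B)) < real n0"
    using reals_Archimedean2 by blast
  define n where "n = Suc n0"
  have n: "L * (Z - B) < 2 * real n * (C - B)"
    using n0 \<open>B < C\<close> by (simp add: n_def field_simps)
  define \<tau> where "\<tau> = exp (- L / (2 * real n))"
  have \<tau>: "0 < \<tau>" "\<tau> < 1"
    using \<open>0 < L\<close> by (auto simp: \<tau>_def n_def)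
  have "\<tau> ^ (2 * n) = exp (real (2 * n) * (- L / (2 * real n)))"
    unfolding \<tau>_def by (rule exp_of_nat_mult[symmetric])
  also have "\<dots> = \<rho>"
    using \<open>0 < \<rho>\<close> by (simp add: L_def n_def)
  finally have \<tau>_pow: "\<tau> ^ (2 * n) = \<rho>" .
  have "1 - \<tau> \<le> L / (2 * real n)"
    using exp_ge_add_one_self[of "- L / (2 * real n)"] unfolding \<tau>_def by simp
  then have \<tau>_bound: "2 * real n * (1 - \<tau>) \<le> L"
    by (simp add: n_def field_simps)
  define E where "E = (C - \<tau> * B) / (1 - \<tau>)"
  have EB: "E - B = (C - B) / (1 - \<tau>)" and EC: "E - C = \<tau> * (E - B)"
    using \<tau> by (simp_all add: E_def field_simps)
  have "0 < E - B"
    using EB \<tau> \<open>B < C\<close> by simp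
  have "(E - C) ^ (2 * n) = \<rho> * (E - B) ^ (2 * n)"
    by (simp add: EC power_mult_distrib \<tau>_pow)
  moreover have bound: "2 * real n * (C - B) \<le> L * (E - B)"
  proof -
    have "2 * real n * (C - B) = 2 * real n * (1 - \<tau>) * (E - B)"
      using \<tau> by (simp add: EB)
    also have "\<dots> \<le> L * (E - B)"
      using \<tau>_bound \<open>0 < E - B\<close> by (simp add: mult_right_mono)
    finally show ?thesis .
  qed
  moreover have "Z < E"
  proof -
    have "L * (Z - B) < L * (E - B)"
      using n bound by linarith
    then show ?thesis
      using \<open>0 < L\<close> by simp
  qed
  ultimately show ?thesis
    using that by (simp add: L_def)
qed

lemma sos_weight_lower:
  fixes A B C Z :: real
  assumes "A < B" and "B < C" and "C \<le> Z"
  obtains u where "u \<in> sos"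
    and "\<And>y. A \<le> y \<Longrightarrow> y \<le> Z \<Longrightarrow> y \<le> B \<or> C \<le> y \<Longrightarrow> poly u y * (y - A) \<le> 1"
    and "\<And>y. B \<le> y \<Longrightarrow> y \<le> C \<Longrightarrow> 1 \<le> poly u y * (y - A)"
proof -
  define \<rho> where "\<rho> = (B - A) / (C - A)"
  have "0 < \<rho>" "\<rho> < 1"
    using assms by (auto simp: \<rho>_def field_simps)
  then obtain n E where "Z < E" and ratio: "(E - C) ^ (2 * n) = \<rho> * (E - B) ^ (2 * n)"
    using pole_with_ratio[OF \<open>B < C\<close>] by metis
  define c where "c = 1 / ((E - B) ^ (2 * n) * (B - A))"
  define \<psi> where "\<psi> y = c * (E - y) ^ (2 * n) * (y - A)" for y
  define u where "u = [:c:] * ([:E, -1:] ^ n) ^ 2"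
  have "0 < c"
    using assms \<open>Z < E\<close> by (simp add: c_def)
  then have "u \<in> sos"
    unfolding u_def by (intro sos_mult const_poly_in_sos power2_in_sos) simp
  have u: "poly u y * (y - A) = \<psi> y" for y
    by (simp add: u_def \<psi>_def power_mult[symmetric] mult.commute)
  have "log_concave_on {A<..<E} (\<lambda>y. c * ((-1) * y + E) ^ (2 * n) * (1 * y + (- A)))"
    using \<open>0 < c\<close> by (intro log_concave_on_mult log_concave_on_const log_concave_on_power
      log_concave_on_affine) auto
  then have lc: "log_concave_on {A<..<E} \<psi>"
    by (simp add: \<psi>_def[abs_def])
  have "C < E"
    using assms \<open>Z < E\<close> by simp
  have "\<psi> B = 1"
    using assms \<open>Z < E\<close> by (simp add: \<psi>_def c_def)
  have "\<psi> C = 1"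
    using assms \<open>Z < E\<close> by (simp add: \<psi>_def c_def ratio \<rho>_def)
  show ?thesis
  proof (rule that[OF \<open>u \<in> sos\<close>, unfolded u])
    fix y
    assume y: "A \<le> y" "y \<le> Z" "y \<le> B \<or> C \<le> y"
    show "\<psi> y \<le> 1"
    proof (cases "y = A")
      case True
      then show ?thesis
        by (simp add: \<psi>_def)
    next
      case False
      then show ?thesis
        using log_concave_on_le_1_outside[OF lc \<open>A < B\<close> \<open>B < C\<close> \<open>C < E\<close> \<open>\<psi> B = 1\<close> \<open>\<psi> C = 1\<close>]
          y \<open>Z < E\<close> by simp
    qed
  next
    fix y
    assume "B \<le> y" "y \<le> C"
    then show "1 \<le> \<psi> y"
      using log_concave_on_ge_1_between[OF lc _ _ \<open>B < C\<close> \<open>\<psi> B = 1\<close> \<open>\<psi> C = 1\<close>] assms \<open>C < E\<close> by simp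
  qed
qed

lemma sos_weight_upper:
  fixes A B C Z :: real
  assumes "A \<le> B" and "B < C" and "C < Z"
  obtains u where "u \<in> sos"
    and "\<And>y. A \<le> y \<Longrightarrow> y \<le> Z \<Longrightarrow> y \<le> B \<or> C \<le> y \<Longrightarrow> poly u y * (Z - y) \<le> 1"
    and "\<And>y. B \<le> y \<Longrightarrow> y \<le> C \<Longrightarrow> 1 \<le> poly u y * (Z - y)"
proof -
  obtain u where u: "u \<in> sos"
    and out: "\<And>y. - Z \<le> y \<Longrightarrow> y \<le> - A \<Longrightarrow> y \<le> - C \<or> - B \<le> y \<Longrightarrow> poly u y * (y + Z) \<le> 1"
    and inside: "\<And>y. - C \<le> y \<Longrightarrow> y \<le> - B \<Longrightarrow> 1 \<le> poly u y * (y + Z)"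
    using sos_weight_lower[of "- Z" "- C" "- B" "- A"] assms by auto
  have "pcompose u [:0, -1:] \<in> sos"
    using u by (rule sos_image[OF pcompose_add pcompose_mult])
  then show ?thesis
    using out[of "- y" for y] inside[of "- y" for y] by (intro that) (auto simp: poly_pcompose)
qed

lemma power_le_exp_mult: "0 \<le> p \<Longrightarrow> p ^ k \<le> exp (real k * (p - 1))"
proof -
  assume "0 \<le> p"
  have "p \<le> exp (p - 1)"
    using exp_ge_add_one_self[of "p - 1"] by simp
  then have "p ^ k \<le> exp (p - 1) ^ k"
    using \<open>0 \<le> p\<close> by (rule power_mono)
  then show ?thesis
    by (simp add: exp_of_nat_mult)
qed

text \<open>\<open>(x - A) ^ m * (E - x) ^ n\<close> increases up to its mode \<open>(n * A + m * E) / (m + n)\<close>; the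
  last assumption says that \<open>B\<close> lies before the mode.\<close>

lemma powers_product_le_before_mode:
  fixes A B E x :: real
  assumes "A < B" "A \<le> x" "x \<le> B" "B < E" and "real n * (B - A) \<le> real m * (E - B)"
  shows "(x - A) ^ m * (E - x) ^ n \<le> (B - A) ^ m * (E - B) ^ n"
proof -
  define p q where "p = (x - A) / (B - A)" and "q = (E - x) / (E - B)"
  have "0 \<le> p" "0 \<le> q"
    using assms by (simp_all add: p_def q_def)
  have "real m * (p - 1) + real n * (q - 1)
      = (B - x) * (real n * (B - A) - real m * (E - B)) / ((E - B) * (B - A))"
    using assms by (simp add: p_def q_def field_simps)
  also have "\<dots> \<le> 0"
    using assms by (intro divide_nonpos_pos mult_nonneg_nonpos) simp_all
  finally have "real m * (p - 1) + real n * (q - 1) \<le> 0" .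
  then have "exp (real m * (p - 1)) * exp (real n * (q - 1)) \<le> 1"
    by (simp add: exp_add[symmetric])
  then have "p ^ m * q ^ n \<le> 1"
    using mult_mono[OF power_le_exp_mult[OF \<open>0 \<le> p\<close>, of m] power_le_exp_mult[OF \<open>0 \<le> q\<close>, of n]]
    by (simp add: \<open>0 \<le> q\<close>)
  have "(x - A) ^ m * (E - x) ^ n = p ^ m * q ^ n * ((B - A) ^ m * (E - B) ^ n)"
    using assms by (simp add: p_def q_def power_divide field_simps)
  also have "\<dots> \<le> 1 * ((B - A) ^ m * (E - B) ^ n)"
    using \<open>p ^ m * q ^ n \<le> 1\<close> assms by (intro mult_right_mono) simp_all
  finally show ?thesis
    by simp
qed

lemma eventually_le_real_mult:
  assumes "0 < d"
  shows "\<forall>\<^sub>F m in sequentially. x \<le> real m * d"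
proof -
  obtain N where "x < real N * d"
    using ex_less_of_nat_mult[OF assms] by blast
  moreover have "real N * d \<le> real m * d" if "N \<le> m" for m
    using that assms by (simp add: mult_right_mono)
  ultimately show ?thesis
    unfolding eventually_sequentially by force
qed

lemma gap_weight_endpoints:
  fixes A B1 C1 B2 C2 E L :: real and m n :: nat
  assumes order: "A < B1" "B1 < C1" "C1 < B2" "B2 < C2" "B2 < E"
    and pole: "2 * real n * (C2 - B2) \<le> L * (E - B2)"
    and decay: "2 * real m * ln ((B1 - A) / (B2 - A)) + (B2 - B1) / (C2 - B2) * L
                + ln ((A - B1) * (A - C1) / ((B2 - B1) * (B2 - C1))) \<le> 0"
  shows "(B1 - A) ^ (2 * m) * (E - B1) ^ (2 * n) * ((A - B1) * (A - C1))
         \<le> (B2 - A) ^ (2 * m) * (E - B2) ^ (2 * n) * ((B2 - B1) * (B2 - C1))"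
proof -
  define r qA Q2 where "r = ln ((B1 - A) / (B2 - A))" and "qA = (A - B1) * (A - C1)"
    and "Q2 = (B2 - B1) * (B2 - C1)"
  have "0 < qA" "0 < Q2"
    using order by (simp_all add: qA_def Q2_def mult_neg_neg)
  have "((E - B1) / (E - B2)) ^ (2 * n) \<le> exp (real (2 * n) * ((E - B1) / (E - B2) - 1))"
    using order by (intro power_le_exp_mult) simp
  also have "real (2 * n) * ((E - B1) / (E - B2) - 1) = 2 * real n * (B2 - B1) / (E - B2)"
    using order by (simp add: field_simps)
  also have "\<dots> \<le> (B2 - B1) / (C2 - B2) * L"
    using mult_left_mono[OF pole, of "B2 - B1"] order by (simp add: field_simps)
  finally have pole_factor: "((E - B1) / (E - B2)) ^ (2 * n) \<le> exp ((B2 - B1) / (C2 - B2) * L)"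
    by simp
  have "((B1 - A) / (B2 - A)) ^ (2 * m) * ((E - B1) / (E - B2)) ^ (2 * n) * (qA / Q2)
      = exp (2 * real m * r) * ((E - B1) / (E - B2)) ^ (2 * n) * exp (ln (qA / Q2))"
    using exp_of_nat_mult[of "2 * m" r] order \<open>0 < qA\<close> \<open>0 < Q2\<close> by (simp add: r_def)
  also have "\<dots> \<le> exp (2 * real m * r) * exp ((B2 - B1) / (C2 - B2) * L) * exp (ln (qA / Q2))"
    by (rule mult_right_mono[OF mult_left_mono[OF pole_factor]]) simp_all
  also have "\<dots> = exp (2 * real m * r + (B2 - B1) / (C2 - B2) * L + ln (qA / Q2))"
    by (simp add: exp_add)
  also have "\<dots> \<le> 1"
    using decay by (simp add: r_def qA_def Q2_def)
  finally have ratio: "((B1 - A) / (B2 - A)) ^ (2 * m) * ((E - B1) / (E - B2)) ^ (2 * n) * (qA / Q2) \<le> 1" .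
  have "(B1 - A) ^ (2 * m) * (E - B1) ^ (2 * n) * qA
      = ((B1 - A) / (B2 - A)) ^ (2 * m) * ((E - B1) / (E - B2)) ^ (2 * n) * (qA / Q2)
        * ((B2 - A) ^ (2 * m) * (E - B2) ^ (2 * n) * Q2)"
    using order \<open>0 < Q2\<close> by (simp add: power_divide field_simps)
  also have "\<dots> \<le> 1 * ((B2 - A) ^ (2 * m) * (E - B2) ^ (2 * n) * Q2)"
    using ratio order \<open>0 < Q2\<close> by (intro mult_right_mono) simp_all
  finally show ?thesis
    by (simp add: qA_def Q2_def)
qed

lemma gap_weight_left_bound:
  fixes A B1 C1 B2 C2 E L x :: real and m n :: nat
  assumes order: "A < B1" "B1 < C1" "C1 < B2" "B2 < C2" "B2 < E"
    and pole: "2 * real n * (C2 - B2) \<le> L * (E - B2)"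
    and mode: "(B1 - A) * L \<le> 2 * real m * (C2 - B2)"
    and decay: "2 * real m * ln ((B1 - A) / (B2 - A)) + (B2 - B1) / (C2 - B2) * L
                + ln ((A - B1) * (A - C1) / ((B2 - B1) * (B2 - C1))) \<le> 0"
    and x: "A \<le> x" "x \<le> B1"
  shows "(x - A) ^ (2 * m) * (E - x) ^ (2 * n) * ((x - B1) * (x - C1))
         \<le> (B2 - A) ^ (2 * m) * (E - B2) ^ (2 * n) * ((B2 - B1) * (B2 - C1))"
proof -
  have "real n * (B1 - A) * (2 * (C2 - B2)) \<le> L * (E - B2) * (B1 - A)"
    using mult_right_mono[OF pole, of "B1 - A"] order by (simp add: algebra_simps)
  also have "\<dots> \<le> real m * (E - B2) * (2 * (C2 - B2))"
    using mult_right_mono[OF mode, of "E - B2"] order by (simp add: algebra_simps)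
  finally have "real n * (B1 - A) \<le> real m * (E - B2)"
    using order by (simp add: mult_le_cancel_right)
  also have "\<dots> \<le> real m * (E - B1)"
    using order by (simp add: mult_left_mono)
  finally have powers: "(x - A) ^ (2 * m) * (E - x) ^ (2 * n) \<le> (B1 - A) ^ (2 * m) * (E - B1) ^ (2 * n)"
    using order x by (intro powers_product_le_before_mode) simp_all
  have "0 \<le> (x - B1) * (x - C1)"
    using order x by (intro mult_nonpos_nonpos) simp_all
  moreover have "(x - B1) * (x - C1) \<le> (A - B1) * (A - C1)"
  proof -
    have "0 \<le> (x - A) * (B1 + C1 - x - A)"
      using order x by (intro mult_nonneg_nonneg) simp_all
    then show ?thesis
      by (simp add: algebra_simps)
  qed
  ultimately have "(x - A) ^ (2 * m) * (E - x) ^ (2 * n) * ((x - B1) * (x - C1))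
      \<le> (B1 - A) ^ (2 * m) * (E - B1) ^ (2 * n) * ((A - B1) * (A - C1))"
    by (intro mult_mono[OF powers]) (use order in simp_all)
  also have "\<dots> \<le> (B2 - A) ^ (2 * m) * (E - B2) ^ (2 * n) * ((B2 - B1) * (B2 - C1))"
    using order pole decay by (rule gap_weight_endpoints)
  finally show ?thesis .
qed

lemma gap_weight_exponent:
  fixes A B1 C1 B2 C2 lq q :: real
  assumes order: "A < B1" "B1 < C1" "C1 < B2" "B2 < C2"
  defines "lr \<equiv> ln ((C2 - A) / (B2 - A))"
  obtains m :: nat where "(B1 - A) * (2 * real m * lr + lq) \<le> 2 * real m * (C2 - B2)"
    and "2 * real m * ln ((B1 - A) / (B2 - A)) + (B2 - B1) / (C2 - B2) * (2 * real m * lr + lq) + q \<le> 0"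
proof -
  define b1 b2 \<theta> where "b1 = B1 - A" and "b2 = B2 - A" and "\<theta> = (B2 - B1) / (C2 - B2)"
  have b: "0 < b1" "b1 < b2"
    using order by (simp_all add: b1_def b2_def)
  have lr_le: "lr \<le> (C2 - B2) / b2"
    using b order ln_le_minus_one[of "(C2 - A) / (B2 - A)"] by (simp add: lr_def b2_def field_simps)
  have "b1 * lr \<le> b1 * ((C2 - B2) / b2)"
    using mult_left_mono[OF lr_le, of b1] b by simp
  also have "\<dots> < C2 - B2"
  proof -
    have "0 < (C2 - B2) * (b2 - b1)"
      using b order by simp
    then show ?thesis
      using b by (simp add: field_simps algebra_simps)
  qed
  finally have "0 < 2 * ((C2 - B2) - b1 * lr)"
    by simp
  moreover have "ln (b1 / b2) + \<theta> * lr < 0"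
  proof -
    have "ln (b1 / b2) < b1 / b2 - 1"
      using b ln_le_minus_one[of "b1 / b2"] ln_eq_minus_one[of "b1 / b2"] by force
    moreover have "\<theta> * lr \<le> \<theta> * ((C2 - B2) / b2)"
      using mult_left_mono[OF lr_le, of \<theta>] order by (simp add: \<theta>_def)
    moreover have "\<theta> * ((C2 - B2) / b2) = (B2 - B1) / b2"
      using order by (simp add: \<theta>_def)
    moreover have "b1 / b2 - 1 = - ((B2 - B1) / b2)"
      using b by (simp add: b1_def b2_def field_simps)
    ultimately show ?thesis
      by linarith
  qed
  then have "0 < 2 * (- (ln (b1 / b2) + \<theta> * lr))"
    by simp
  ultimately have "\<forall>\<^sub>F m in sequentially. b1 * lq \<le> real m * (2 * ((C2 - B2) - b1 * lr))
      \<and> \<theta> * lq + q \<le> real m * (2 * (- (ln (b1 / b2) + \<theta> * lr)))"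
    by (intro eventually_conj eventually_le_real_mult)
  then obtain m where "b1 * lq \<le> real m * (2 * ((C2 - B2) - b1 * lr))"
    and "\<theta> * lq + q \<le> real m * (2 * (- (ln (b1 / b2) + \<theta> * lr)))"
    unfolding eventually_sequentially by blast
  then show ?thesis
    by (intro that[of m]) (simp_all add: b1_def b2_def \<theta>_def algebra_simps)
qed

lemma gap_weight_exists:
  fixes A B1 C1 B2 C2 Z :: real
  assumes order: "A \<le> B1" "B1 < C1" "C1 < B2" "B2 < C2" "C2 \<le> Z"
  obtains m n :: nat and E where "Z < E"
    and "(C2 - A) ^ (2 * m) * (E - C2) ^ (2 * n) * ((C2 - B1) * (C2 - C1))
         = (B2 - A) ^ (2 * m) * (E - B2) ^ (2 * n) * ((B2 - B1) * (B2 - C1))"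
    and "\<And>x. A \<le> x \<Longrightarrow> x \<le> B1 \<Longrightarrow> (x - A) ^ (2 * m) * (E - x) ^ (2 * n) * ((x - B1) * (x - C1))
           \<le> (B2 - A) ^ (2 * m) * (E - B2) ^ (2 * n) * ((B2 - B1) * (B2 - C1))"
proof -
  define b2 c2 where "b2 = B2 - A" and "c2 = C2 - A"
  define Q2 Q3 where "Q2 = (B2 - B1) * (B2 - C1)" and "Q3 = (C2 - B1) * (C2 - C1)"
  define lr lq where "lr = ln (c2 / b2)" and "lq = ln (Q3 / Q2)"
  have b: "0 < b2" "b2 < c2"
    using order by (simp_all add: b2_def c2_def)
  have "0 < Q2" "Q2 < Q3"
    using order by (auto simp: Q2_def Q3_def intro: mult_strict_mono)
  then have "0 < lq"
    by (simp add: lq_def)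
  have "0 < lr"
    using b by (simp add: lr_def)
  obtain m :: nat where m: "A < B1 \<Longrightarrow> (B1 - A) * (2 * real m * lr + lq) \<le> 2 * real m * (C2 - B2)
      \<and> 2 * real m * ln ((B1 - A) / (B2 - A)) + (B2 - B1) / (C2 - B2) * (2 * real m * lr + lq)
          + ln ((A - B1) * (A - C1) / Q2) \<le> 0"
  proof (cases "A < B1")
    case True
    then show ?thesis
      using gap_weight_exponent[OF True order(2-4), of lq "ln ((A - B1) * (A - C1) / Q2)"] that
      unfolding lr_def b2_def c2_def by blast
  qed (use that in blast)
  define L where "L = 2 * real m * lr + lq"
  have "0 < L"
    using \<open>0 < lr\<close> \<open>0 < lq\<close> by (simp add: L_def add_nonneg_pos)
  obtain n E where "Z < E" and ratio: "(E - C2) ^ (2 * n) = exp (- L) * (E - B2) ^ (2 * n)"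
    and pole: "2 * real n * (C2 - B2) \<le> L * (E - B2)"
  proof (rule pole_with_ratio[OF \<open>B2 < C2\<close>, of "exp (- L)" Z])
    fix n E
    assume "Z < E" "(E - C2) ^ (2 * n) = exp (- L) * (E - B2) ^ (2 * n)"
      and "2 * real n * (C2 - B2) \<le> - ln (exp (- L)) * (E - B2)"
    then show thesis
      using that by simp
  qed (use \<open>0 < L\<close> in simp_all)
  show ?thesis
  proof (rule that[OF \<open>Z < E\<close>])
    have "exp L = (c2 / b2) ^ (2 * m) * (Q3 / Q2)"
      using b \<open>0 < Q2\<close> \<open>Q2 < Q3\<close> exp_of_nat_mult[of "2 * m" lr]
      by (simp add: L_def lr_def lq_def exp_add)
    then have rescale: "exp (- L) * (c2 ^ (2 * m) * Q3) = b2 ^ (2 * m) * Q2"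
      using b \<open>0 < Q2\<close> by (simp add: exp_minus power_divide field_simps)
    then show "(C2 - A) ^ (2 * m) * (E - C2) ^ (2 * n) * ((C2 - B1) * (C2 - C1))
        = (B2 - A) ^ (2 * m) * (E - B2) ^ (2 * n) * ((B2 - B1) * (B2 - C1))"
    proof -
      have "(C2 - A) ^ (2 * m) * (E - C2) ^ (2 * n) * ((C2 - B1) * (C2 - C1))
          = (E - B2) ^ (2 * n) * (exp (- L) * (c2 ^ (2 * m) * Q3))"
        by (simp add: ratio c2_def Q3_def)
      then show ?thesis
        unfolding rescale by (simp add: b2_def Q2_def)
    qed
  next
    fix x
    assume x: "A \<le> x" "x \<le> B1"
    show "(x - A) ^ (2 * m) * (E - x) ^ (2 * n) * ((x - B1) * (x - C1))
        \<le> (B2 - A) ^ (2 * m) * (E - B2) ^ (2 * n) * ((B2 - B1) * (B2 - C1))"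
    proof (cases "A < B1")
      case True
      show ?thesis
      proof (rule gap_weight_left_bound[OF True order(2-4) _ pole _ _ x])
        show "B2 < E"
          using order \<open>Z < E\<close> by simp
        show "(B1 - A) * L \<le> 2 * real m * (C2 - B2)"
          using m[OF True] by (simp add: L_def)
        show "2 * real m * ln ((B1 - A) / (B2 - A)) + (B2 - B1) / (C2 - B2) * L
            + ln ((A - B1) * (A - C1) / ((B2 - B1) * (B2 - C1))) \<le> 0"
          using m[OF True] by (simp add: L_def Q2_def)
      qed
    next
      case False
      then have "x = B1"
        using x by simp
      then show ?thesis
        using order \<open>Z < E\<close> by simp
    qed
  qed
qed

lemma sos_weight_gap:
  fixes A B1 C1 B2 C2 Z :: real
  assumes order: "A \<le> B1" "B1 < C1" "C1 < B2" "B2 < C2" "C2 \<le> Z"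
  obtains u where "u \<in> sos"
    and "\<And>y. A \<le> y \<Longrightarrow> y \<le> Z \<Longrightarrow> y \<le> B2 \<or> C2 \<le> y \<Longrightarrow> poly u y * ((y - B1) * (y - C1)) \<le> 1"
    and "\<And>y. B2 \<le> y \<Longrightarrow> y \<le> C2 \<Longrightarrow> 1 \<le> poly u y * ((y - B1) * (y - C1))"
proof -
  obtain m n E where "Z < E"
    and ratio: "(C2 - A) ^ (2 * m) * (E - C2) ^ (2 * n) * ((C2 - B1) * (C2 - C1))
         = (B2 - A) ^ (2 * m) * (E - B2) ^ (2 * n) * ((B2 - B1) * (B2 - C1))"
    and left: "\<And>x. A \<le> x \<Longrightarrow> x \<le> B1 \<Longrightarrow> (x - A) ^ (2 * m) * (E - x) ^ (2 * n) * ((x - B1) * (x - C1))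
           \<le> (B2 - A) ^ (2 * m) * (E - B2) ^ (2 * n) * ((B2 - B1) * (B2 - C1))"
    by (rule gap_weight_exists[OF order]) blast
  define c where "c = 1 / ((B2 - A) ^ (2 * m) * (E - B2) ^ (2 * n) * ((B2 - B1) * (B2 - C1)))"
  define \<psi> where "\<psi> y = c * ((y - A) ^ (2 * m) * (E - y) ^ (2 * n) * ((y - B1) * (y - C1)))" for y
  define u where "u = [:c:] * ([:-A, 1:] ^ m * [:E, -1:] ^ n) ^ 2"
  have "0 < c"
    using order \<open>Z < E\<close> by (simp add: c_def)
  then have "u \<in> sos"
    unfolding u_def by (intro sos_mult const_poly_in_sos power2_in_sos) simp
  have u: "poly u y * ((y - B1) * (y - C1)) = \<psi> y" for y
    by (simp add: u_def \<psi>_def power_mult_distrib power_mult[symmetric] ac_simps)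
  have "log_concave_on {C1<..<E}
      (\<lambda>y. c * ((1 * y + - A) ^ (2 * m) * ((-1) * y + E) ^ (2 * n) * ((1 * y + - B1) * (1 * y + - C1))))"
    using \<open>0 < c\<close> order by (intro log_concave_on_mult log_concave_on_const log_concave_on_power
      log_concave_on_affine) auto
  then have lc: "log_concave_on {C1<..<E} \<psi>"
    by (simp add: \<psi>_def[abs_def])
  have "C2 < E"
    using order \<open>Z < E\<close> by simp
  have "\<psi> B2 = 1"
    using order \<open>Z < E\<close> by (simp add: \<psi>_def c_def)
  have "\<psi> C2 = 1"
    using order \<open>Z < E\<close> by (simp add: \<psi>_def c_def ratio)
  show ?thesis
  proof (rule that[OF \<open>u \<in> sos\<close>, unfolded u])
    fix y
    assume y: "A \<le> y" "y \<le> Z" "y \<le> B2 \<or> C2 \<le> y"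
    consider "y \<le> B1" | "B1 < y" "y \<le> C1" | "C1 < y"
      by linarith
    then show "\<psi> y \<le> 1"
    proof cases
      case 1
      have "\<psi> y \<le> c * ((B2 - A) ^ (2 * m) * (E - B2) ^ (2 * n) * ((B2 - B1) * (B2 - C1)))"
        unfolding \<psi>_def by (rule mult_left_mono[OF left[OF \<open>A \<le> y\<close> 1]]) (use \<open>0 < c\<close> in simp)
      also have "\<dots> = 1"
        using order \<open>Z < E\<close> by (simp add: c_def)
      finally show ?thesis .
    next
      case 2
      have "0 \<le> c * ((y - A) ^ (2 * m) * (E - y) ^ (2 * n))"
        using \<open>0 < c\<close> y \<open>Z < E\<close> by simp
      moreover have "(y - B1) * (y - C1) \<le> 0"
        using 2 by (intro mult_nonneg_nonpos) simp_all
      ultimately have "c * ((y - A) ^ (2 * m) * (E - y) ^ (2 * n)) * ((y - B1) * (y - C1)) \<le> 0"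
        by (rule mult_nonneg_nonpos)
      then have "\<psi> y \<le> 0"
        by (simp add: \<psi>_def mult.assoc)
      then show ?thesis
        by simp
    next
      case 3
      then show ?thesis
        using log_concave_on_le_1_outside[OF lc \<open>C1 < B2\<close> \<open>B2 < C2\<close> \<open>C2 < E\<close> \<open>\<psi> B2 = 1\<close> \<open>\<psi> C2 = 1\<close>]
          y \<open>Z < E\<close> by simp
    qed
  next
    fix y
    assume "B2 \<le> y" "y \<le> C2"
    then show "1 \<le> \<psi> y"
      using log_concave_on_ge_1_between[OF lc _ _ \<open>B2 < C2\<close> \<open>\<psi> B2 = 1\<close> \<open>\<psi> C2 = 1\<close>] order \<open>C2 < E\<close>
      by simp
  qed
qed

section \<open>Products of the natural generators\<close>

lemma linear_factors_dvd:
  fixes p :: "'a::field poly"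
  assumes "poly p b = 0" and "poly p c = 0" and "b \<noteq> c"
  shows "[:-c, 1:] * [:-b, 1:] dvd p"
proof -
  obtain g where g: "p = [:-b, 1:] * g"
    using assms(1) by (auto simp: poly_eq_0_iff_dvd)
  then have "poly g c = 0"
    using assms(2,3) by auto
  then have "[:-c, 1:] dvd g"
    by (simp add: poly_eq_0_iff_dvd)
  then show ?thesis
    unfolding g by (metis dvd_refl mult.commute mult_dvd_mono)
qed

text \<open>The weight \<open>u\<close> forces \<open>1 - u f\<close> to vanish at \<open>B\<close> and \<open>C\<close> with the sign of \<open>g\<close>; the quotient
  \<open>v = (1 - u f) / g\<close> is then nonnegative on \<open>[A, Z]\<close>, hence generated by the endpoint generators.\<close>

lemma qmodule_mult_gap:
  fixes f u :: "real poly"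
  assumes "A < Z" and "A \<le> B" and "B < C" and "C \<le> Z"
    and f: "f \<in> qmodule S" "[:-A, 1:] * f \<in> qmodule S" "[:Z, -1:] * f \<in> qmodule S"
    and g: "[:-C, 1:] * [:-B, 1:] \<in> qmodule S"
    and "u \<in> sos"
    and out: "\<And>y. A \<le> y \<Longrightarrow> y \<le> Z \<Longrightarrow> y \<le> B \<or> C \<le> y \<Longrightarrow> poly u y * poly f y \<le> 1"
    and inside: "\<And>y. B \<le> y \<Longrightarrow> y \<le> C \<Longrightarrow> 1 \<le> poly u y * poly f y"
  shows "f * ([:-C, 1:] * [:-B, 1:]) \<in> qmodule S"
proof -
  define P where "P = 1 - u * f"
  have "poly P B = 0" "poly P C = 0"
    using out[of B] inside[of B] out[of C] inside[of C] assms(2-4) by (simp_all add: P_def)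
  then obtain v where v: "P = [:-C, 1:] * [:-B, 1:] * v"
    using linear_factors_dvd[of P B C] \<open>B < C\<close> by (auto elim: dvdE)
  have bezout: "u * f + v * ([:-C, 1:] * [:-B, 1:]) = 1"
    using v by (simp add: P_def algebra_simps)
  have "0 \<le> poly v y" if "A \<le> y" "y \<le> Z" for y
  proof (rule poly_nonneg_except_finite[OF \<open>A < Z\<close>, of "{B, C}"])
    fix y
    assume y: "A \<le> y" "y \<le> Z" "y \<notin> {B, C}"
    define q where "q = (y - C) * (y - B)"
    have "0 \<le> q * poly P y"
    proof (cases "B < y \<and> y < C")
      case True
      then have "q \<le> 0"
        by (simp add: q_def mult_nonpos_nonneg)
      then show ?thesis
        using inside[of y] True by (simp add: P_def mult_nonpos_nonpos)
    next
      case False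
      then have "0 \<le> q"
        using y \<open>B < C\<close> by (auto simp: q_def zero_le_mult_iff)
      then show ?thesis
        using out[of y] y False by (simp add: P_def not_less)
    qed
    moreover have "poly P y = q * poly v y"
      by (simp add: v q_def algebra_simps)
    ultimately have "0 \<le> (q * q) * poly v y"
      by (simp add: mult.assoc)
    moreover have "q \<noteq> 0"
      using y by (simp add: q_def)
    then have "0 < q * q"
      using not_real_square_gt_zero by blast
    ultimately show "0 \<le> poly v y"
      by (simp add: zero_le_mult_iff)
  qed (use that in simp_all)
  then have "v \<in> interval_qmodule A Z"
    using \<open>A < Z\<close> by (rule nonneg_on_interval_imp_interval_qmodule[rotated])
  then have "v * f \<in> qmodule S"
    using f(1) by (rule qmodule_mult) (use f in auto)
  moreover have "u * ([:-C, 1:] * [:-B, 1:]) \<in> qmodule S"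
    using \<open>u \<in> sos\<close> g by (rule qmodule_sos_mult)
  ultimately show ?thesis
    by (intro qmodule_bezout_mult[OF bezout])
qed

locale interval_generators =
  fixes S :: "real poly set" and A Z :: real
  assumes finite: "finite S" and lower: "[:-A, 1:] \<in> S" and upper: "[:Z, -1:] \<in> S"
    and A_le_Z: "A \<le> Z"
begin

lemma lower_in_qmodule: "[:-A, 1:] \<in> qmodule S"
  using finite lower by (rule generator_in_qmodule)

lemma upper_in_qmodule: "[:Z, -1:] \<in> qmodule S"
  using finite upper by (rule generator_in_qmodule)

lemma lower_mult_upper: "[:-A, 1:] * [:Z, -1:] \<in> qmodule S"
  using qmodule_mono[OF finite, of "{[:-A, 1:], [:Z, -1:]}"] lower upper interval_generators_mult[OF A_le_Z]
  by auto

lemma square_in_qmodule: "p * p \<in> qmodule S"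
  using sos_in_qmodule[OF power2_in_sos[of p]] by (simp add: power2_eq_square)

lemma lower_mult_gap:
  assumes "A \<le> B" "B < C" "C \<le> Z" and gap: "[:-C, 1:] * [:-B, 1:] \<in> S"
  shows "[:-A, 1:] * ([:-C, 1:] * [:-B, 1:]) \<in> qmodule S"
proof (cases "A = B")
  case True
  have "[:-A, 1:] * ([:-C, 1:] * [:-B, 1:]) = [:-C, 1:] ^ 2 * [:-A, 1:] + [:C - A:] * ([:-C, 1:] * [:-B, 1:])"
    by (rule poly_eqI_eval) (simp add: True power2_eq_square algebra_simps)
  also have "\<dots> \<in> qmodule S"
  proof (rule qmodule_add)
    show "[:-C, 1:] ^ 2 * [:-A, 1:] \<in> qmodule S"
      by (rule qmodule_sos_mult[OF power2_in_sos lower_in_qmodule])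
    show "[:C - A:] * ([:-C, 1:] * [:-B, 1:]) \<in> qmodule S"
      using \<open>B < C\<close> True finite gap
      by (intro qmodule_sos_mult[OF const_poly_in_sos] generator_in_qmodule) simp_all
  qed
  finally show ?thesis .
next
  case False
  then have "A < B" "A < Z"
    using assms by simp_all
  obtain u where "u \<in> sos"
    and out: "\<And>y. A \<le> y \<Longrightarrow> y \<le> Z \<Longrightarrow> y \<le> B \<or> C \<le> y \<Longrightarrow> poly u y * (y - A) \<le> 1"
    and inside: "\<And>y. B \<le> y \<Longrightarrow> y \<le> C \<Longrightarrow> 1 \<le> poly u y * (y - A)"
    by (rule sos_weight_lower[OF \<open>A < B\<close> \<open>B < C\<close> \<open>C \<le> Z\<close>]) blast
  show ?thesis
  proof (rule qmodule_mult_gap[OF \<open>A < Z\<close> \<open>A \<le> B\<close> \<open>B < C\<close> \<open>C \<le> Z\<close> lower_in_qmodule _ _ _ \<open>u \<in> sos\<close>])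
    show "[:-A, 1:] * [:-A, 1:] \<in> qmodule S"
      by (rule square_in_qmodule)
    show "[:Z, -1:] * [:-A, 1:] \<in> qmodule S"
      using lower_mult_upper by (simp add: mult.commute)
    show "[:-C, 1:] * [:-B, 1:] \<in> qmodule S"
      using finite gap by (rule generator_in_qmodule)
  qed (use out inside in simp_all)
qed

lemma gap_mult_upper:
  assumes "A \<le> B" "B < C" "C \<le> Z" and gap: "[:-C, 1:] * [:-B, 1:] \<in> S"
  shows "[:Z, -1:] * ([:-C, 1:] * [:-B, 1:]) \<in> qmodule S"
proof (cases "C = Z")
  case True
  have "[:Z, -1:] * ([:-C, 1:] * [:-B, 1:]) = [:-B, 1:] ^ 2 * [:Z, -1:] + [:Z - B:] * ([:-C, 1:] * [:-B, 1:])"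
    by (rule poly_eqI_eval) (simp add: True power2_eq_square algebra_simps)
  also have "\<dots> \<in> qmodule S"
  proof (rule qmodule_add)
    show "[:-B, 1:] ^ 2 * [:Z, -1:] \<in> qmodule S"
      by (rule qmodule_sos_mult[OF power2_in_sos upper_in_qmodule])
    show "[:Z - B:] * ([:-C, 1:] * [:-B, 1:]) \<in> qmodule S"
      using \<open>B < C\<close> True finite gap
      by (intro qmodule_sos_mult[OF const_poly_in_sos] generator_in_qmodule) simp_all
  qed
  finally show ?thesis .
next
  case False
  then have "C < Z" "A < Z"
    using assms by simp_all
  obtain u where "u \<in> sos"
    and out: "\<And>y. A \<le> y \<Longrightarrow> y \<le> Z \<Longrightarrow> y \<le> B \<or> C \<le> y \<Longrightarrow> poly u y * (Z - y) \<le> 1"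
    and inside: "\<And>y. B \<le> y \<Longrightarrow> y \<le> C \<Longrightarrow> 1 \<le> poly u y * (Z - y)"
    by (rule sos_weight_upper[OF \<open>A \<le> B\<close> \<open>B < C\<close> \<open>C < Z\<close>]) blast
  show ?thesis
  proof (rule qmodule_mult_gap[OF \<open>A < Z\<close> \<open>A \<le> B\<close> \<open>B < C\<close> \<open>C \<le> Z\<close> upper_in_qmodule _ _ _ \<open>u \<in> sos\<close>])
    show "[:-A, 1:] * [:Z, -1:] \<in> qmodule S"
      by (rule lower_mult_upper)
    show "[:Z, -1:] * [:Z, -1:] \<in> qmodule S"
      by (rule square_in_qmodule)
    show "[:-C, 1:] * [:-B, 1:] \<in> qmodule S"
      using finite gap by (rule generator_in_qmodule)
  qed (use out inside in simp_all)
qed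

lemma gap_mult_gap:
  assumes order: "A \<le> B1" "B1 < C1" "C1 \<le> B2" "B2 < C2" "C2 \<le> Z"
    and gaps: "[:-C1, 1:] * [:-B1, 1:] \<in> S" "[:-C2, 1:] * [:-B2, 1:] \<in> S"
  shows "([:-C1, 1:] * [:-B1, 1:]) * ([:-C2, 1:] * [:-B2, 1:]) \<in> qmodule S"
proof (cases "C1 = B2")
  case True
  text \<open>Adjacent gaps: \<open>x - C1\<close> is a convex combination of \<open>x - C2\<close> and \<open>x - B1\<close>.\<close>
  define \<alpha> \<beta> where "\<alpha> = (C1 - B1) / (C2 - B1)" and "\<beta> = (C2 - C1) / (C2 - B1)"
  have "0 \<le> \<alpha>" "0 \<le> \<beta>"
    using order by (simp_all add: \<alpha>_def \<beta>_def)
  have combination: "\<alpha> * (x - C2) + \<beta> * (x - B1) = x - C1" for x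
  proof -
    have \<alpha>: "\<alpha> * (C2 - B1) = C1 - B1" and \<beta>: "\<beta> * (C2 - B1) = C2 - C1"
      using order by (simp_all add: \<alpha>_def \<beta>_def)
    have "(\<alpha> * (x - C2) + \<beta> * (x - B1)) * (C2 - B1)
        = (\<alpha> * (C2 - B1)) * (x - C2) + (\<beta> * (C2 - B1)) * (x - B1)"
      by (simp add: algebra_simps)
    also have "\<dots> = (x - C1) * (C2 - B1)"
      unfolding \<alpha> \<beta> by (simp add: algebra_simps)
    finally have "(\<alpha> * (x - C2) + \<beta> * (x - B1)) * (C2 - B1) = (x - C1) * (C2 - B1)" .
    then show ?thesis
      using order by simp
  qed
  have "([:-C1, 1:] * [:-B1, 1:]) * ([:-C2, 1:] * [:-B2, 1:])
      = [:\<alpha>:] * [:-C2, 1:] ^ 2 * ([:-C1, 1:] * [:-B1, 1:])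
        + [:\<beta>:] * [:-B1, 1:] ^ 2 * ([:-C2, 1:] * [:-B2, 1:])" (is "?lhs = ?rhs")
  proof (rule poly_eqI_eval)
    fix x
    have "poly ?rhs x = (x - C1) * (x - B1) * (x - C2) * (\<alpha> * (x - C2) + \<beta> * (x - B1))"
      by (simp add: True power2_eq_square algebra_simps)
    then show "poly ?lhs x = poly ?rhs x"
      unfolding combination by (simp add: True algebra_simps)
  qed
  also have "\<dots> \<in> qmodule S"
  proof (rule qmodule_add)
    show "[:\<alpha>:] * [:-C2, 1:] ^ 2 * ([:-C1, 1:] * [:-B1, 1:]) \<in> qmodule S"
      using \<open>0 \<le> \<alpha>\<close> finite gaps(1)
      by (intro qmodule_sos_mult[OF sos_mult[OF const_poly_in_sos power2_in_sos]] generator_in_qmodule)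
    show "[:\<beta>:] * [:-B1, 1:] ^ 2 * ([:-C2, 1:] * [:-B2, 1:]) \<in> qmodule S"
      using \<open>0 \<le> \<beta>\<close> finite gaps(2)
      by (intro qmodule_sos_mult[OF sos_mult[OF const_poly_in_sos power2_in_sos]] generator_in_qmodule)
  qed
  finally show ?thesis .
next
  case False
  then have "C1 < B2" "A < Z"
    using order by simp_all
  obtain u where "u \<in> sos"
    and out: "\<And>y. A \<le> y \<Longrightarrow> y \<le> Z \<Longrightarrow> y \<le> B2 \<or> C2 \<le> y \<Longrightarrow> poly u y * ((y - B1) * (y - C1)) \<le> 1"
    and inside: "\<And>y. B2 \<le> y \<Longrightarrow> y \<le> C2 \<Longrightarrow> 1 \<le> poly u y * ((y - B1) * (y - C1))"
    by (rule sos_weight_gap[OF \<open>A \<le> B1\<close> \<open>B1 < C1\<close> \<open>C1 < B2\<close> \<open>B2 < C2\<close> \<open>C2 \<le> Z\<close>]) blast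
  have "A \<le> B2" "C1 \<le> Z"
    using order by simp_all
  show ?thesis
  proof (rule qmodule_mult_gap[OF \<open>A < Z\<close> \<open>A \<le> B2\<close> \<open>B2 < C2\<close> \<open>C2 \<le> Z\<close> _ _ _ _ \<open>u \<in> sos\<close>])
    show "[:-C1, 1:] * [:-B1, 1:] \<in> qmodule S"
      using finite gaps(1) by (rule generator_in_qmodule)
    show "[:-A, 1:] * ([:-C1, 1:] * [:-B1, 1:]) \<in> qmodule S"
      using order \<open>C1 \<le> Z\<close> gaps(1) by (intro lower_mult_gap) simp_all
    show "[:Z, -1:] * ([:-C1, 1:] * [:-B1, 1:]) \<in> qmodule S"
      using order \<open>C1 \<le> Z\<close> gaps(1) by (intro gap_mult_upper) simp_all
    show "[:-C2, 1:] * [:-B2, 1:] \<in> qmodule S"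
      using finite gaps(2) by (rule generator_in_qmodule)
    show "poly u y * poly ([:-C1, 1:] * [:-B1, 1:]) y \<le> 1"
      if "A \<le> y" "y \<le> Z" "y \<le> B2 \<or> C2 \<le> y" for y
      using out[OF that] by (simp add: algebra_simps)
    show "1 \<le> poly u y * poly ([:-C1, 1:] * [:-B1, 1:]) y" if "B2 \<le> y" "y \<le> C2" for y
      using inside[OF that] by (simp add: algebra_simps)
  qed
qed

end

lemma natural_endpoints_le:
  fixes a b :: "nat \<Rightarrow> real"
  assumes "\<And>i. 1 \<le> i \<Longrightarrow> i \<le> k \<Longrightarrow> a i \<le> b i"
    and "\<And>i. 1 \<le> i \<Longrightarrow> i < k \<Longrightarrow> b i < a (i + 1)"
  shows "1 \<le> i \<Longrightarrow> i \<le> j \<Longrightarrow> j \<le> k \<Longrightarrow> a i \<le> b j"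
proof (induct j)
  case (Suc j)
  show ?case
  proof (cases "i = Suc j")
    case False
    with Suc have "a i \<le> b j" "b j < a (j + 1)" "a (j + 1) \<le> b (Suc j)"
      using assms[of j] assms(1)[of "Suc j"] by simp_all
    then show ?thesis
      by simp
  qed (use assms Suc in simp)
qed simp

lemma natural_endpoints_less:
  fixes a b :: "nat \<Rightarrow> real"
  assumes "\<And>i. 1 \<le> i \<Longrightarrow> i \<le> k \<Longrightarrow> a i \<le> b i"
    and "\<And>i. 1 \<le> i \<Longrightarrow> i < k \<Longrightarrow> b i < a (i + 1)"
    and "1 \<le> i" "i < j" "j \<le> k"
  shows "b i < a j"
proof (cases "i + 1 = j")
  case False
  have "b i < a (i + 1)"
    using assms by simp
  also have "a (i + 1) \<le> b (j - 1)"
    using natural_endpoints_le[where a=a and b=b and k=k, OF assms(1,2), of "i + 1" "j - 1"] assms(3-5) False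
    by simp
  also have "b (j - 1) < a j"
    using assms(2)[of "j - 1"] assms(3-5) by simp
  finally show ?thesis .
qed (use assms(2)[of i] assms(3-5) in simp)

lemma nat_gens_eq:
  "nat_gens k a b = insert [:-a 1, 1:] (insert [:b k, -1:] ((\<lambda>i. [:-a i, 1:] * [:-b (i - 1), 1:]) ` {2..k}))"
  by (auto simp: nat_gens_def)

lemma nat_gens_mult_in_qmodule:
  fixes k :: nat and a b :: "nat \<Rightarrow> real"
  assumes "1 \<le> k"
    and ord1: "\<And>i. 1 \<le> i \<Longrightarrow> i \<le> k \<Longrightarrow> a i \<le> b i"
    and ord2: "\<And>i. 1 \<le> i \<Longrightarrow> i < k \<Longrightarrow> b i < a (i + 1)"
    and "s \<in> nat_gens k a b" and "t \<in> nat_gens k a b"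
  shows "s * t \<in> qmodule (nat_gens k a b)"
proof -
  define gap where "gap i = [:-a i, 1:] * [:-b (i - 1), 1:]" for i
  have S: "nat_gens k a b = insert [:-a 1, 1:] (insert [:b k, -1:] (gap ` {2..k}))"
    unfolding nat_gens_eq gap_def ..
  note le = natural_endpoints_le[where a=a and b=b and k=k, OF ord1 ord2]
    and less = natural_endpoints_less[where a=a and b=b and k=k, OF ord1 ord2]
  interpret interval_generators "nat_gens k a b" "a 1" "b k"
    by unfold_locales (use le[of 1 k] \<open>1 \<le> k\<close> in \<open>auto simp: S\<close>)
  have gap_in: "gap i \<in> nat_gens k a b" if "i \<in> {2..k}" for i
    using that by (simp add: S)
  have gap_cases: "t = [:-a 1, 1:] \<or> t = [:b k, -1:] \<or> (\<exists>i\<in>{2..k}. t = gap i)"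
    if "t \<in> nat_gens k a b" for t
    using that unfolding S by blast
  have lower: "[:-a 1, 1:] * t \<in> qmodule (nat_gens k a b)" if "t \<in> nat_gens k a b" for t
    using gap_cases[OF that]
  proof (elim disjE bexE)
    fix i
    assume i: "i \<in> {2..k}" and t: "t = gap i"
    have "[:-a 1, 1:] * ([:-a i, 1:] * [:-b (i - 1), 1:]) \<in> qmodule (nat_gens k a b)"
    proof (rule lower_mult_gap)
      show "a 1 \<le> b (i - 1)" "b (i - 1) < a i" "a i \<le> b k"
        using i by (auto intro: le less)
      show "[:-a i, 1:] * [:-b (i - 1), 1:] \<in> nat_gens k a b"
        using gap_in[OF i] by (simp only: gap_def)
    qed
    then show ?thesis
      by (simp only: t gap_def)
  qed (simp_all only: square_in_qmodule lower_mult_upper)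
  have upper: "[:b k, -1:] * t \<in> qmodule (nat_gens k a b)" if "t \<in> nat_gens k a b" for t
    using gap_cases[OF that]
  proof (elim disjE bexE)
    fix i
    assume i: "i \<in> {2..k}" and t: "t = gap i"
    have "[:b k, -1:] * ([:-a i, 1:] * [:-b (i - 1), 1:]) \<in> qmodule (nat_gens k a b)"
    proof (rule gap_mult_upper)
      show "a 1 \<le> b (i - 1)" "b (i - 1) < a i" "a i \<le> b k"
        using i by (auto intro: le less)
      show "[:-a i, 1:] * [:-b (i - 1), 1:] \<in> nat_gens k a b"
        using gap_in[OF i] by (simp only: gap_def)
    qed
    then show ?thesis
      by (simp only: t gap_def)
  next
    assume "t = [:-a 1, 1:]"
    then show ?thesis
      using lower_mult_upper by (simp only: mult.commute)
  qed (simp only: square_in_qmodule)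
  have gaps: "gap i * gap j \<in> qmodule (nat_gens k a b)" if "i \<in> {2..k}" "j \<in> {2..k}" "i \<le> j" for i j
  proof (cases "i = j")
    case False
    then have "i < j"
      using that by simp
    have "([:-a i, 1:] * [:-b (i - 1), 1:]) * ([:-a j, 1:] * [:-b (j - 1), 1:]) \<in> qmodule (nat_gens k a b)"
    proof (rule gap_mult_gap)
      show "a 1 \<le> b (i - 1)" "b (i - 1) < a i" "a i \<le> b (j - 1)" "b (j - 1) < a j" "a j \<le> b k"
        using that \<open>i < j\<close> by (auto intro: le less)
      show "[:-a i, 1:] * [:-b (i - 1), 1:] \<in> nat_gens k a b"
        and "[:-a j, 1:] * [:-b (j - 1), 1:] \<in> nat_gens k a b"
        using gap_in[OF that(1)] gap_in[OF that(2)] by (simp_all only: gap_def)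
    qed
    then show ?thesis
      by (simp only: gap_def)
  qed (simp only: square_in_qmodule)
  consider "s = [:-a 1, 1:]" | "s = [:b k, -1:]" | "t = [:-a 1, 1:]" | "t = [:b k, -1:]"
    | i j where "s = gap i" "t = gap j" "i \<in> {2..k}" "j \<in> {2..k}"
    using assms(4,5) unfolding S by blast
  then show ?thesis
  proof cases
    case 1
    then show ?thesis
      using lower[OF assms(5)] by simp
  next
    case 2
    then show ?thesis
      using upper[OF assms(5)] by simp
  next
    case 3
    then show ?thesis
      using lower[OF assms(4)] by (metis mult.commute)
  next
    case 4
    then show ?thesis
      using upper[OF assms(4)] by (metis mult.commute)
  next
    case 5
    then show ?thesis
      using gaps[of i j] gaps[of j i] by (metis mult.commute nat_le_linear)
  qed
qed

theorem lemma1: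
  fixes k :: nat and a b :: "nat \<Rightarrow> real"
  assumes "k \<ge> 1"
    and "\<And>i. 1 \<le> i \<Longrightarrow> i \<le> k \<Longrightarrow> a i \<le> b i"
    and "\<And>i. 1 \<le> i \<Longrightarrow> i < k \<Longrightarrow> b i < a (i + 1)"
  shows "preordering (nat_gens k a b) = qmodule (nat_gens k a b)
         \<and> preordering ((\<lambda>p. [:p:]) ` nat_gens k a b :: real poly poly set)
             = qmodule ((\<lambda>p. [:p:]) ` nat_gens k a b)"
proof
  have finite: "finite (nat_gens k a b)"
    by (simp add: nat_gens_eq)
  have mult: "s * t \<in> qmodule (nat_gens k a b)" if "s \<in> nat_gens k a b" "t \<in> nat_gens k a b" for s t
    by (rule nat_gens_mult_in_qmodule[where k=k and a=a and b=b, OF assms(1) _ _ that])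
      (use assms in blast)+
  show "preordering (nat_gens k a b) = qmodule (nat_gens k a b)"
    using finite mult by (rule preordering_eq_qmodule)
  have "[:s:] * [:t:] \<in> qmodule ((\<lambda>p. [:p:]) ` nat_gens k a b)"
    if "s \<in> nat_gens k a b" "t \<in> nat_gens k a b" for s t
  proof -
    have "[:s * t:] \<in> qmodule ((\<lambda>p. [:p:]) ` nat_gens k a b)"
      by (rule qmodule_image[OF _ _ _ mult[OF that]]) (simp_all add: inj_on_def)
    then show ?thesis
      by (simp add: mult.commute)
  qed
  then show "preordering ((\<lambda>p. [:p:]) ` nat_gens k a b :: real poly poly set)
      = qmodule ((\<lambda>p. [:p:]) ` nat_gens k a b)"
    using finite by (intro preordering_eq_qmodule) blast+
qed

end
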